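(* Let $\mathcal{M}$ be a finite $\mathcal{R}$-trivial monoid and let $\mathcal{S}$ be a generating set for $\mathcal{M}$ (as a monoid). Two elements $\sigma,\sigma'\in\mathcal{M}$ have the same loop-type if and only if $\mathcal{L}^{\mathcal{S}}_\sigma=\mathcal{L}^{\mathcal{S}}_{\sigma'}$.
   Context: $\mathcal{M}$ is $\mathcal{R}$-trivial: $\sigma\mathcal{M}=\tau\mathcal{M}$ implies $\sigma=\tau$. For $\sigma\in\mathcal{M}$, $\mathcal{L}_\sigma:=\{\tau\in\mathcal{M}:\sigma\tau=\sigma\}$ and $\mathcal{L}^{\mathcal{S}}_\sigma:=\mathcal{L}_\sigma\cap\mathcal{S}=\{\kappa\in\mathcal{S}:\sigma\kappa=\sigma\}$. Elements $\sigma,\sigma'$ have the same loop-type ($\sigma\sim\sigma'$) if $\mathcal{L}_\sigma=\mathcal{L}_{\sigma'}$. *)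

theory Defs
  imports Main
begin

definition R_trivial :: "'a::monoid_mult itself \<Rightarrow> bool" where
  "R_trivial _ \<longleftrightarrow> (\<forall>\<sigma> \<tau> :: 'a. range (\<lambda>x. \<sigma> * x) = range (\<lambda>x. \<tau> * x) \<longrightarrow> \<sigma> = \<tau>)"

inductive_set submonoid_gen :: "'a::monoid_mult set \<Rightarrow> 'a set" for S where
  one: "1 \<in> submonoid_gen S"
| gen: "s \<in> S \<Longrightarrow> s \<in> submonoid_gen S"
| mult: "x \<in> submonoid_gen S \<Longrightarrow> y \<in> submonoid_gen S \<Longrightarrow> x * y \<in> submonoid_gen S"

definition generates :: "'a::monoid_mult set \<Rightarrow> bool" where
  "generates S \<longleftrightarrow> submonoid_gen S = UNIV"

definition loops :: "'a::monoid_mult \<Rightarrow> 'a set" where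
  "loops \<sigma> = {\<tau>. \<sigma> * \<tau> = \<sigma>}"

definition loops_in :: "'a::monoid_mult set \<Rightarrow> 'a \<Rightarrow> 'a set" where
  "loops_in S \<sigma> = loops \<sigma> \<inter> S"

definition same_loop_type :: "'a::monoid_mult \<Rightarrow> 'a \<Rightarrow> bool" where
  "same_loop_type \<sigma> \<sigma>' \<longleftrightarrow> loops \<sigma> = loops \<sigma>'"

end

theory Submission
  imports Defs
begin

text \<open>In an R-trivial monoid, \<open>\<sigma> a b = \<sigma>\<close> forces \<open>\<sigma> a = \<sigma>\<close>, since then \<open>\<sigma> a\<close> and \<open>\<sigma>\<close>
  generate the same right ideal. Hence a product fixes \<open>\<sigma>\<close> from the right only if each
  factor does, so \<open>\<L>\<^sub>\<sigma>\<close> is the submonoid generated by the generators it contains, and is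
  therefore determined by \<open>\<L>\<^sup>S\<^sub>\<sigma>\<close>.\<close>

lemma R_trivial_right_prefix_fix:
  fixes \<sigma> a b :: "'a::monoid_mult"
  assumes R: "R_trivial TYPE('a)" and fix_ab: "\<sigma> * a * b = \<sigma>"
  shows "\<sigma> * a = \<sigma>"
proof -
  have "range (\<lambda>x. \<sigma> * a * x) = range (\<lambda>x. \<sigma> * x)"
  proof
    show "range (\<lambda>x. \<sigma> * a * x) \<subseteq> range (\<lambda>x. \<sigma> * x)"
      by (auto simp: mult.assoc)
    show "range (\<lambda>x. \<sigma> * x) \<subseteq> range (\<lambda>x. \<sigma> * a * x)"
    proof
      fix y assume "y \<in> range (\<lambda>x. \<sigma> * x)"
      then obtain x where "y = \<sigma> * x" by blast
      then have "y = \<sigma> * a * (b * x)" using fix_ab by (metis mult.assoc)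
      then show "y \<in> range (\<lambda>x. \<sigma> * a * x)" by blast
    qed
  qed
  then show ?thesis using R unfolding R_trivial_def by blast
qed

lemma mult_in_loops_iff:
  fixes x y :: "'a::monoid_mult"
  assumes R: "R_trivial TYPE('a)"
  shows "x * y \<in> loops \<sigma> \<longleftrightarrow> x \<in> loops \<sigma> \<and> y \<in> loops \<sigma>"
proof
  assume "x * y \<in> loops \<sigma>"
  then have xy: "\<sigma> * x * y = \<sigma>" by (simp add: loops_def mult.assoc)
  then have x: "\<sigma> * x = \<sigma>" by (rule R_trivial_right_prefix_fix[OF R])
  with xy have "\<sigma> * y = \<sigma>" by simp
  with x show "x \<in> loops \<sigma> \<and> y \<in> loops \<sigma>" by (simp add: loops_def)
next
  assume "x \<in> loops \<sigma> \<and> y \<in> loops \<sigma>"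
  then have "\<sigma> * x * y = \<sigma>" by (simp add: loops_def)
  then show "x * y \<in> loops \<sigma>" by (simp add: loops_def mult.assoc)
qed

lemma submonoid_gen_loops_in_subset:
  "submonoid_gen (loops_in S \<sigma>) \<subseteq> loops \<sigma>"
proof
  fix \<tau> assume "\<tau> \<in> submonoid_gen (loops_in S \<sigma>)"
  then show "\<tau> \<in> loops \<sigma>"
  proof induction
    case (mult x y)
    then have "\<sigma> * x * y = \<sigma>" by (simp add: loops_def)
    then show ?case by (simp add: loops_def mult.assoc)
  qed (auto simp: loops_in_def loops_def)
qed

lemma loops_eq_submonoid_gen_loops_in:
  fixes S :: "'a::monoid_mult set"
  assumes R: "R_trivial TYPE('a)" and gen: "generates S"
  shows "loops \<sigma> = submonoid_gen (loops_in S \<sigma>)"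
proof
  have "\<tau> \<in> loops \<sigma> \<longrightarrow> \<tau> \<in> submonoid_gen (loops_in S \<sigma>)" if "\<tau> \<in> submonoid_gen S" for \<tau>
    using that
  proof induction
    case one
    then show ?case by (simp add: submonoid_gen.one)
  next
    case (gen s)
    then show ?case by (auto simp: loops_in_def intro: submonoid_gen.gen)
  next
    case (mult x y)
    then show ?case by (simp add: mult_in_loops_iff[OF R] submonoid_gen.mult)
  qed
  then show "loops \<sigma> \<subseteq> submonoid_gen (loops_in S \<sigma>)"
    using gen by (auto simp: generates_def)
qed (rule submonoid_gen_loops_in_subset)

theorem mainTheorem5:
  fixes S :: "'a::{monoid_mult, finite} set" and \<sigma> \<sigma>' :: 'a
  assumes "R_trivial TYPE('a)"
    and "generates S"
  shows "same_loop_type \<sigma> \<sigma>' \<longleftrightarrow> loops_in S \<sigma> = loops_in S \<sigma>'"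
proof
  assume "same_loop_type \<sigma> \<sigma>'"
  then show "loops_in S \<sigma> = loops_in S \<sigma>'" by (simp add: same_loop_type_def loops_in_def)
next
  assume "loops_in S \<sigma> = loops_in S \<sigma>'"
  then show "same_loop_type \<sigma> \<sigma>'"
    by (simp add: same_loop_type_def loops_eq_submonoid_gen_loops_in[OF assms])
qed

end
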